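(* Let $\Sigma$ be a finite alphabet and suppose $C:\Sigma^k\to\Sigma^n$ is a $(q,\delta,1-\varepsilon,s)$-relaxed locally decodable code with a nonadaptive relaxed decoder, where $s<|\Sigma|^{-q}$. Then for any error radius \[ r\in\Bigl(0,\ \tfrac{\delta(|\Sigma|-1)}{q|\Sigma|}\Bigl(1-\tfrac{\varepsilon|\Sigma|}{|\Sigma|-1}-s|\Sigma|^{q}\Bigr)\Bigr), \] the code $C$ is also a \[ \Bigl(q,\ r,\ \varepsilon+s|\Sigma|^{q}\Bigl(1-\tfrac{1}{|\Sigma|}\Bigr)+\tfrac{rq}{\delta}\Bigr)\text{-locally decodable code}. \] In particular, for $\Sigma=\{0,1\}$ it is a $\bigl(q,r,\varepsilon+\frac{s2^q}{2}+\frac{rq}{\delta}\bigr)$-locally decodable code.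
   Context: $\Delta$ denotes Hamming distance. A code $C:\Sigma^k\to\Sigma^n$ is a $(q,\delta,s)$-LDC if there is a randomized decoder reading at most $q$ positions of its oracle $y\in\Sigma^n$ and outputting a symbol in $\Sigma$ such that for all $b\in\Sigma^k$, $i\in[k]$, $y$ with $\Delta(y,C(b))\le\delta n$, $\Pr[\mathsf{Dec}^y(i)\ne b_i]\le s$. $C$ is a $(q,\delta,c,s)$-RLDC if there is a $q$-query decoder with outputs in $\Sigma\cup\{\bot\}$ such that for all such $b,i,y$: (completeness) $\Pr[\mathsf{Dec}^{C(b)}(i)=b_i]\ge c$, and (soundness) $\Pr[\mathsf{Dec}^y(i)\notin\{b_i,\bot\}]\le s$. A decoder is nonadaptive if the positions it queries do not depend on answers to earlier queries. *)

theory Defs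
  imports "HOL-Probability.Probability"
begin

text \<open>Words over the alphabet 'a are lists; a code C maps words of length k to
words of length n. Positions are 0-based.\<close>

definition hamming :: "'a list \<Rightarrow> 'a list \<Rightarrow> nat" where
  "hamming x y = card {j. j < length x \<and> j < length y \<and> x ! j \<noteq> y ! j}"

text \<open>A deterministic query algorithm (possibly adaptive) is a decision tree: it either
outputs a value, or queries a position j and continues depending on the answer.\<close>

datatype ('s, 'o) dtree = Leaf 'o | Query nat "'s \<Rightarrow> ('s, 'o) dtree"

primrec eval_tree :: "('s, 'o) dtree \<Rightarrow> 's list \<Rightarrow> 'o" where
  "eval_tree (Leaf v) y = v"
| "eval_tree (Query j g) y = eval_tree (g (y ! j)) y"

inductive valid_tree :: "nat \<Rightarrow> nat \<Rightarrow> ('s, 'o) dtree \<Rightarrow> bool" for n where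
  "valid_tree n q (Leaf v)"
| "j < n \<Longrightarrow> (\<And>a. valid_tree n q (g a)) \<Longrightarrow> valid_tree n (Suc q) (Query j g)"

text \<open>follows ps t: the positions queried by t (along every path) are a prefix of ps,
i.e. they do not depend on answers to earlier queries.\<close>
inductive follows :: "nat list \<Rightarrow> ('s, 'o) dtree \<Rightarrow> bool" where
  "follows ps (Leaf v)"
| "(\<And>a. follows ps (g a)) \<Longrightarrow> follows (j # ps) (Query j g)"

text \<open>A randomized decoder is, for each index i, a probability distribution over
decision trees.\<close>

definition query_decoder :: "nat \<Rightarrow> nat \<Rightarrow> nat \<Rightarrow> (nat \<Rightarrow> ('s, 'o) dtree pmf) \<Rightarrow> bool" where
  "query_decoder k n q Dec \<longleftrightarrow> (\<forall>i<k. \<forall>t\<in>set_pmf (Dec i). valid_tree n q t)"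

definition nonadaptive :: "nat \<Rightarrow> (nat \<Rightarrow> ('s, 'o) dtree pmf) \<Rightarrow> bool" where
  "nonadaptive k Dec \<longleftrightarrow> (\<forall>i<k. \<forall>t\<in>set_pmf (Dec i). \<exists>ps. follows ps t)"

definition LDC_decoder :: "('a list \<Rightarrow> 'a list) \<Rightarrow> nat \<Rightarrow> nat \<Rightarrow> nat \<Rightarrow> real \<Rightarrow> real
    \<Rightarrow> (nat \<Rightarrow> ('a, 'a) dtree pmf) \<Rightarrow> bool" where
  "LDC_decoder C k n q \<delta> s Dec \<longleftrightarrow> query_decoder k n q Dec \<and>
     (\<forall>b i y. length b = k \<longrightarrow> i < k \<longrightarrow> length y = n \<longrightarrow> real (hamming y (C b)) \<le> \<delta> * real n \<longrightarrow>
        measure_pmf.prob (Dec i) {t. eval_tree t y \<noteq> b ! i} \<le> s)"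

definition is_LDC :: "('a list \<Rightarrow> 'a list) \<Rightarrow> nat \<Rightarrow> nat \<Rightarrow> nat \<Rightarrow> real \<Rightarrow> real \<Rightarrow> bool" where
  "is_LDC C k n q \<delta> s \<longleftrightarrow> (\<exists>Dec. LDC_decoder C k n q \<delta> s Dec)"

text \<open>(q,delta,c,s)-RLDC decoder; the output None stands for the symbol \<bottom>.\<close>
definition RLDC_decoder :: "('a list \<Rightarrow> 'a list) \<Rightarrow> nat \<Rightarrow> nat \<Rightarrow> nat \<Rightarrow> real \<Rightarrow> real \<Rightarrow> real
    \<Rightarrow> (nat \<Rightarrow> ('a, 'a option) dtree pmf) \<Rightarrow> bool" where
  "RLDC_decoder C k n q \<delta> c s Dec \<longleftrightarrow> query_decoder k n q Dec \<and>
     (\<forall>b i. length b = k \<longrightarrow> i < k \<longrightarrow>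
        measure_pmf.prob (Dec i) {t. eval_tree t (C b) = Some (b ! i)} \<ge> c) \<and>
     (\<forall>b i y. length b = k \<longrightarrow> i < k \<longrightarrow> length y = n \<longrightarrow> real (hamming y (C b)) \<le> \<delta> * real n \<longrightarrow>
        measure_pmf.prob (Dec i) {t. eval_tree t y \<notin> {Some (b ! i), None}} \<le> s)"

end

theory Submission
  imports Defs
begin

text \<open>
A position is heavy for index \<open>i\<close> if the relaxed decoder queries it with probability more than
\<open>q/(\<delta> n)\<close>; as at most \<open>q\<close> positions are read, at most \<open>\<delta> n\<close> positions are heavy. The local
decoder samples a query pattern \<open>t\<close> of the relaxed decoder and outputs the unique non-\<open>\<bottom>\<close> answer
that \<open>t\<close> can give on words agreeing with the received word off the heavy positions, or a uniformly
random symbol if there is no unique one. Unless \<open>t\<close> fails on the codeword (probability at most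
\<open>\<epsilon>\<close>) or reads a corrupted light position (probability at most \<open>r q/\<delta>\<close> by a union bound), the
correct symbol is such an answer, and any other one is a wrong answer of \<open>t\<close> on the codeword
altered at heavy positions. Such altered words lie within distance \<open>\<delta> n\<close> of the codeword. A
uniformly random filling of the heavy positions agrees with a given alteration on the at most \<open>q\<close>
positions read by \<open>t\<close> with probability at least \<open>|\<Sigma>|\<^sup>-\<^sup>q\<close>, so soundness bounds the probability
of such \<open>t\<close> by \<open>s |\<Sigma>|\<^sup>q\<close>; even for them the random guess is right with probability \<open>1/|\<Sigma>|\<close>.
\<close>

section \<open>Nonadaptive decision trees\<close>

lemma valid_tree_mono:
  assumes "valid_tree n q t" "q \<le> q'"
  shows "valid_tree n q' t"
  using assms
proof (induction arbitrary: q' rule: valid_tree.induct)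
  case (1 q v)
  then show ?case by (auto intro: valid_tree.intros)
next
  case (2 j q g)
  then obtain q'' where "q' = Suc q''" "q \<le> q''" by (cases q') auto
  with 2 show ?case by (auto intro: valid_tree.intros)
qed

lemma follows_take:
  assumes "valid_tree n q t" "follows ps t"
  shows "follows (take q ps) t"
  using assms
proof (induction arbitrary: ps rule: valid_tree.induct)
  case (1 q v)
  then show ?case by (auto intro: follows.intros)
next
  case (2 j q g)
  from 2(4) obtain ps' where "ps = j # ps'" "\<And>a. follows ps' (g a)"
    by (cases rule: follows.cases) auto
  with 2 show ?case by (auto intro: follows.intros)
qed

lemma eval_tree_cong_follows:
  assumes "valid_tree n q t" "follows ps t" "\<forall>j\<in>set ps. j < n \<longrightarrow> z ! j = z' ! j"
  shows "eval_tree t z = eval_tree t z'"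
  using assms
proof (induction arbitrary: ps rule: valid_tree.induct)
  case (1 q v)
  then show ?case by simp
next
  case (2 j q g)
  from 2(4) obtain ps' where "ps = j # ps'" "\<And>a. follows ps' (g a)"
    by (cases rule: follows.cases) auto
  with 2 show ?case by auto
qed

text \<open>For adaptive trees the choice is arbitrary; truncating to \<open>q\<close> entries below \<open>n\<close> makes
  the size bounds hold for every tree.\<close>

definition query_list :: "nat \<Rightarrow> nat \<Rightarrow> ('s, 'o) dtree \<Rightarrow> nat list" where
  "query_list n q t = filter (\<lambda>j. j < n) (take q (SOME ps. follows ps t))"

lemma set_query_list_subset: "set (query_list n q t) \<subseteq> {..<n}"
  by (auto simp: query_list_def)

lemma length_query_list_le: "length (query_list n q t) \<le> q"
  unfolding query_list_def by (metis length_filter_le length_take min.bounded_iff nle_le order_trans)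

lemma card_set_query_list_le: "card (set (query_list n q t)) \<le> q"
  using length_query_list_le card_length order_trans by blast

lemma eval_tree_cong_query_list:
  assumes "valid_tree n q t" "\<exists>ps. follows ps t" "\<forall>j\<in>set (query_list n q t). z ! j = z' ! j"
  shows "eval_tree t z = eval_tree t z'"
proof -
  have "follows (SOME ps. follows ps t) t"
    using assms(2) by (rule someI_ex)
  then have "follows (take q (SOME ps. follows ps t)) t"
    by (rule follows_take[OF assms(1)])
  then show ?thesis
    by (rule eval_tree_cong_follows[OF assms(1)]) (use assms(3) in \<open>auto simp: query_list_def\<close>)
qed

primrec query_tree :: "nat list \<Rightarrow> ((nat \<Rightarrow> 's) \<Rightarrow> 'o) \<Rightarrow> ('s, 'o) dtree" where
  "query_tree [] F = Leaf (F (\<lambda>_. undefined))"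
| "query_tree (j # ps) F = Query j (\<lambda>a. query_tree ps (\<lambda>f. F (f(j := a))))"

lemma eval_query_tree: "eval_tree (query_tree ps F) y = F (restrict ((!) y) (set ps))"
proof (induction ps arbitrary: F)
  case Nil
  then show ?case by (simp add: restrict_def)
next
  case (Cons j ps)
  have "(restrict ((!) y) (set ps))(j := y ! j) = restrict ((!) y) (set (j # ps))"
    by (auto simp: restrict_def)
  then show ?case by (simp only: eval_tree.simps query_tree.simps Cons.IH)
qed

lemma valid_query_tree: "set ps \<subseteq> {..<n} \<Longrightarrow> valid_tree n (length ps) (query_tree ps F)"
  by (induction ps arbitrary: F) (auto intro: valid_tree.intros)

section \<open>Heavy positions and random restrictions\<close>

lemma prob_bind_pmf:
  fixes M :: "'a pmf"
  shows "measure_pmf.prob (bind_pmf M N) X = (\<integral>x. measure_pmf.prob (N x) X \<partial>M)"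
proof -
  have "ennreal (measure_pmf.prob (bind_pmf M N) X) = (\<integral>\<^sup>+x. ennreal (measure_pmf.prob (N x) X) \<partial>M)"
    by (simp add: measure_pmf.emeasure_eq_measure[symmetric])
  also have "\<dots> = ennreal (\<integral>x. measure_pmf.prob (N x) X \<partial>M)"
    by (rule nn_integral_eq_integral) (auto intro!: measure_pmf.integrable_const_bound[where B=1])
  finally show ?thesis by (simp add: integral_nonneg_AE)
qed

lemma integral_of_bool_pmf:
  fixes M :: "'a pmf"
  shows "(\<integral>x. of_bool (P x) \<partial>M) = measure_pmf.prob M {x. P x}"
proof -
  have "(\<integral>x. of_bool (P x) \<partial>M) = (\<integral>x. indicator {x. P x} x \<partial>M)"
    by (simp add: indicator_def)
  also have "\<dots> = measure_pmf.prob M {x. P x}"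
    by simp
  finally show ?thesis .
qed

lemma integral_prob_swap:
  fixes M :: "'a pmf" and N :: "'b pmf"
  assumes "finite (set_pmf N)"
  shows "(\<integral>x. measure_pmf.prob N {y. E x y} \<partial>M) = (\<integral>y. measure_pmf.prob M {x. E x y} \<partial>N)"
proof -
  have "measure_pmf.prob N {y. E x y} = (\<Sum>y\<in>set_pmf N. indicator {x. E x y} x * pmf N y)" for x
  proof -
    have "measure_pmf.prob N {y. E x y} = (\<integral>y. indicator {y. E x y} y \<partial>N)"
      by simp
    also have "\<dots> = (\<Sum>y\<in>set_pmf N. indicator {y. E x y} y * pmf N y)"
      by (rule integral_measure_pmf_real[OF assms]) (auto simp: indicator_def)
    finally show ?thesis by (simp add: indicator_def)
  qed
  then have "(\<integral>x. measure_pmf.prob N {y. E x y} \<partial>M)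
      = (\<integral>x. (\<Sum>y\<in>set_pmf N. indicator {x. E x y} x * pmf N y) \<partial>M)"
    by simp
  also have "\<dots> = (\<Sum>y\<in>set_pmf N. measure_pmf.prob M {x. E x y} * pmf N y)"
    by (subst Bochner_Integration.integral_sum)
       (auto intro!: measure_pmf.integrable_const_bound[where B=1] simp: pmf_le_1)
  also have "\<dots> = (\<integral>y. measure_pmf.prob M {x. E x y} \<partial>N)"
    by (rule integral_measure_pmf_real[OF assms, symmetric]) auto
  finally show ?thesis .
qed

lemma prob_uniform_neq:
  fixes x :: "'a::finite"
  shows "measure_pmf.prob (pmf_of_set UNIV) {\<sigma>. \<sigma> \<noteq> x} = 1 - 1 / real CARD('a)"
proof -
  have "{\<sigma>. \<sigma> \<noteq> x} = space (measure_pmf (pmf_of_set (UNIV :: 'a set))) - {x}"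
    by auto
  then show ?thesis
    by (simp add: measure_pmf.prob_compl measure_pmf_of_set diff_divide_distrib)
qed

lemma sum_prob_mem_le:
  fixes M :: "'t pmf" and P :: "'t \<Rightarrow> nat set"
  assumes "\<And>t. t \<in> set_pmf M \<Longrightarrow> P t \<subseteq> {..<n}" "\<And>t. t \<in> set_pmf M \<Longrightarrow> card (P t) \<le> q"
  shows "(\<Sum>j<n. measure_pmf.prob M {t. j \<in> P t}) \<le> real q"
proof -
  have "(\<Sum>j<n. measure_pmf.prob M {t. j \<in> P t}) = (\<integral>t. (\<Sum>j<n. indicator {t. j \<in> P t} t) \<partial>M)"
    by (subst Bochner_Integration.integral_sum)
       (auto intro!: measure_pmf.integrable_const_bound[where B=1])
  also have "\<dots> \<le> real q"
  proof (rule measure_pmf.integral_le_const)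
    show "integrable M (\<lambda>t. \<Sum>j<n. indicator {t. j \<in> P t} t :: real)"
      by (intro Bochner_Integration.integrable_sum measure_pmf.integrable_const_bound[where B=1]) auto
    have "(\<Sum>j<n. indicator {t. j \<in> P t} t :: real) = real (card (P t))" if "t \<in> set_pmf M" for t
      using assms(1)[OF that] unfolding indicator_def mem_Collect_eq
      by (subst sum_of_bool_eq) (auto simp: Int_absorb1)
    then show "AE t in M. (\<Sum>j<n. indicator {t. j \<in> P t} t :: real) \<le> real q"
      using assms(2) by (simp add: AE_measure_pmf_iff)
  qed
  finally show ?thesis .
qed

definition heavy_positions :: "'t pmf \<Rightarrow> ('t \<Rightarrow> nat set) \<Rightarrow> nat \<Rightarrow> real \<Rightarrow> nat set" where
  "heavy_positions M P n \<theta> = {j. j < n \<and> \<theta> < measure_pmf.prob M {t. j \<in> P t}}"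

lemma card_heavy_positions_le:
  assumes P: "\<And>t. t \<in> set_pmf M \<Longrightarrow> P t \<subseteq> {..<n}" "\<And>t. t \<in> set_pmf M \<Longrightarrow> card (P t) \<le> q"
    and "0 < \<delta>"
  shows "real (card (heavy_positions M P n (real q / (\<delta> * real n)))) \<le> \<delta> * real n"
proof (cases "heavy_positions M P n (real q / (\<delta> * real n)) = {}")
  case False
  define \<theta> where "\<theta> = real q / (\<delta> * real n)"
  define H where "H = heavy_positions M P n \<theta>"
  have "real (card H) * \<theta> = (\<Sum>j\<in>H. \<theta>)"
    by simp
  also have "\<dots> < (\<Sum>j\<in>H. measure_pmf.prob M {t. j \<in> P t})"
    using False by (intro sum_strict_mono) (auto simp: H_def \<theta>_def heavy_positions_def)
  also have "\<dots> \<le> (\<Sum>j<n. measure_pmf.prob M {t. j \<in> P t})"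
    by (intro sum_mono2) (auto simp: H_def heavy_positions_def)
  also have "\<dots> \<le> real q"
    by (rule sum_prob_mem_le[OF P])
  finally have less: "real (card H) * \<theta> < real q" .
  have "0 < n"
    using False by (auto simp: heavy_positions_def)
  with less \<open>0 < \<delta>\<close> have "real (card H) * real q < \<delta> * real n * real q"
    by (simp add: \<theta>_def field_simps)
  then show ?thesis
    by (simp add: H_def \<theta>_def mult_less_cancel_right less_imp_le)
qed (use \<open>0 < \<delta>\<close> in simp)

lemma prob_hits_light_le:
  assumes "D \<subseteq> {..<n}" "0 \<le> \<theta>"
  shows "measure_pmf.prob M {t. \<exists>j\<in>P t. j \<in> D \<and> j \<notin> heavy_positions M P n \<theta>}
    \<le> real (card D) * \<theta>"
proof -
  define L where "L = D - heavy_positions M P n \<theta>"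
  have "finite D"
    using finite_subset[OF assms(1)] by blast
  then have fin: "finite L"
    unfolding L_def by blast
  have "{t. \<exists>j\<in>P t. j \<in> D \<and> j \<notin> heavy_positions M P n \<theta>} = (\<Union>j\<in>L. {t. j \<in> P t})"
    by (auto simp: L_def)
  also have "measure_pmf.prob M \<dots> \<le> (\<Sum>j\<in>L. measure_pmf.prob M {t. j \<in> P t})"
    by (rule measure_pmf.finite_measure_subadditive_finite[OF fin]) auto
  also have "\<dots> \<le> (\<Sum>j\<in>L. \<theta>)"
    using assms(1) by (intro sum_mono) (auto simp: L_def heavy_positions_def not_less)
  also have "\<dots> \<le> real (card D) * \<theta>"
    using assms \<open>finite D\<close> by (auto simp: L_def intro!: mult_right_mono card_mono)
  finally show ?thesis .
qed

lemma prob_Pi_uniform_agree: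
  fixes g :: "nat \<Rightarrow> 'a::finite"
  assumes "finite H" "A \<subseteq> H"
  shows "measure_pmf.prob (Pi_pmf H undefined (\<lambda>_. pmf_of_set UNIV)) {f. \<forall>j\<in>A. f j = g j}
    = (1 / real CARD('a)) ^ card A"
proof -
  define B where "B j = (if j \<in> A then {g j} else UNIV)" for j
  have "{f. \<forall>j\<in>A. f j = g j} = Pi H B"
    using assms(2) by (auto simp: B_def Pi_def)
  then have "measure_pmf.prob (Pi_pmf H undefined (\<lambda>_. pmf_of_set UNIV)) {f. \<forall>j\<in>A. f j = g j}
      = (\<Prod>j\<in>H. measure_pmf.prob (pmf_of_set UNIV) (B j))"
    using measure_Pi_pmf_Pi[OF assms(1)] by simp
  also have "\<dots> = (\<Prod>j\<in>H. if j \<in> A then 1 / real CARD('a) else 1)"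
    by (intro prod.cong) (auto simp: B_def measure_pmf_of_set)
  also have "\<dots> = (1 / real CARD('a)) ^ card A"
    using assms by (simp add: prod.If_cases Int_absorb1)
  finally show ?thesis .
qed

lemma prob_random_filling_ge:
  fixes Q :: "'a::finite list \<Rightarrow> bool"
  assumes "finite H" "P \<subseteq> {..<n}" "card P \<le> q"
    and Q: "\<And>z'. \<forall>j\<in>P. z' ! j = z ! j \<Longrightarrow> Q z'"
    and z: "\<forall>j<n. j \<notin> H \<longrightarrow> z ! j = c ! j"
  shows "(1 / real CARD('a)) ^ q
    \<le> measure_pmf.prob (Pi_pmf H undefined (\<lambda>_. pmf_of_set UNIV)) {f. Q (map (override_on ((!) c) f H) [0..<n])}"
proof -
  define R where "R = Pi_pmf H undefined (\<lambda>_. pmf_of_set (UNIV :: 'a set))"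
  have "{f. \<forall>j\<in>P \<inter> H. f j = z ! j} \<subseteq> {f. Q (map (override_on ((!) c) f H) [0..<n])}"
    using assms(2) z by (auto intro!: Q simp: override_on_def)
  then have "measure_pmf.prob R {f. \<forall>j\<in>P \<inter> H. f j = z ! j}
      \<le> measure_pmf.prob R {f. Q (map (override_on ((!) c) f H) [0..<n])}"
    by (rule measure_pmf.finite_measure_mono) simp
  moreover have "measure_pmf.prob R {f. \<forall>j\<in>P \<inter> H. f j = z ! j} = (1 / real CARD('a)) ^ card (P \<inter> H)"
    unfolding R_def by (rule prob_Pi_uniform_agree) (use \<open>finite H\<close> in auto)
  moreover have "card (P \<inter> H) \<le> q"
    using assms(3) card_mono[OF finite_subset[OF assms(2) finite_lessThan] Int_lower1, of H] by linarith
  ultimately show ?thesis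
    using power_decreasing[of "card (P \<inter> H)" q "1 / real CARD('a)"] by (simp add: R_def)
qed

lemma prob_exists_bad_alteration_le:
  fixes M :: "'t pmf" and P :: "'t \<Rightarrow> nat set" and bad :: "'t \<Rightarrow> 'a::finite list \<Rightarrow> bool"
  assumes P: "\<And>t. t \<in> set_pmf M \<Longrightarrow> P t \<subseteq> {..<n}" "\<And>t. t \<in> set_pmf M \<Longrightarrow> card (P t) \<le> q"
    and local: "\<And>t z z'. t \<in> set_pmf M \<Longrightarrow> \<forall>j\<in>P t. z ! j = z' ! j \<Longrightarrow> bad t z = bad t z'"
    and "finite H"
    and sound: "\<And>z. length z = n \<Longrightarrow> \<forall>j<n. j \<notin> H \<longrightarrow> z ! j = c ! j \<Longrightarrow>
        measure_pmf.prob M {t. bad t z} \<le> s"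
  shows "measure_pmf.prob M {t. \<exists>z. length z = n \<and> (\<forall>j<n. j \<notin> H \<longrightarrow> z ! j = c ! j) \<and> bad t z}
    \<le> s * real CARD('a) ^ q"
proof -
  define N where "N = real CARD('a)"
  define R where "R = Pi_pmf H undefined (\<lambda>_. pmf_of_set (UNIV :: 'a set))"
  define fill where "fill f = map (override_on ((!) c) f H) [0..<n]" for f
  define S where "S = {t. \<exists>z. length z = n \<and> (\<forall>j<n. j \<notin> H \<longrightarrow> z ! j = c ! j) \<and> bad t z}"
  have "1 \<le> N"
    by (simp add: N_def Suc_le_eq)
  have lower: "(1 / N) ^ q \<le> measure_pmf.prob R {f. bad t (fill f)}" if t: "t \<in> set_pmf M" "t \<in> S" for t
  proof -
    from t(2) obtain z where z: "\<forall>j<n. j \<notin> H \<longrightarrow> z ! j = c ! j" "bad t z"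
      by (auto simp: S_def)
    show ?thesis
      unfolding N_def R_def fill_def
      by (rule prob_random_filling_ge[OF \<open>finite H\<close> P[OF t(1)] _ z(1)]) (use local[OF t(1)] z(2) in metis)
  qed
  have "(1 / N) ^ q * measure_pmf.prob M S = (\<integral>t. (1 / N) ^ q * indicator S t \<partial>M)"
    by simp
  also have "\<dots> \<le> (\<integral>t. measure_pmf.prob R {f. bad t (fill f)} \<partial>M)"
    using lower
    by (intro integral_mono_AE)
       (auto intro!: measure_pmf.integrable_const_bound[where B=1] simp: AE_measure_pmf_iff indicator_def)
  also have "\<dots> = (\<integral>f. measure_pmf.prob M {t. bad t (fill f)} \<partial>R)"
    by (rule integral_prob_swap) (auto simp: R_def set_Pi_pmf \<open>finite H\<close>)
  also have "\<dots> \<le> s"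
    using sound
    by (intro measure_pmf.integral_le_const)
       (auto intro!: measure_pmf.integrable_const_bound[where B=1]
         simp: AE_measure_pmf_iff fill_def override_on_def)
  finally have "(1 / N) ^ q * measure_pmf.prob M S \<le> s" .
  with \<open>1 \<le> N\<close> show ?thesis
    by (simp add: S_def N_def power_one_over field_simps)
qed

section \<open>The local decoder\<close>

definition candidates :: "nat \<Rightarrow> nat set \<Rightarrow> ('s, 'a option) dtree \<Rightarrow> 's list \<Rightarrow> 'a set" where
  "candidates n H t y =
     {\<sigma>. \<exists>z. length z = n \<and> (\<forall>j<n. j \<notin> H \<longrightarrow> z ! j = y ! j) \<and> eval_tree t z = Some \<sigma>}"

definition local_output :: "nat \<Rightarrow> nat set \<Rightarrow> ('s, 'a option) dtree \<Rightarrow> 'a \<Rightarrow> 's list \<Rightarrow> 'a" where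
  "local_output n H t \<sigma> y =
     (if is_singleton (candidates n H t y) then the_elem (candidates n H t y) else \<sigma>)"

definition local_tree :: "nat \<Rightarrow> nat \<Rightarrow> nat set \<Rightarrow> ('s, 'a option) dtree \<Rightarrow> 'a \<Rightarrow> ('s, 'a) dtree" where
  "local_tree n q H t \<sigma> =
     query_tree (query_list n q t) (\<lambda>f. local_output n H t \<sigma> (map f [0..<n]))"

lemma candidates_cong:
  assumes t: "valid_tree n q t" "\<exists>ps. follows ps t"
    and "length y = n" "length y' = n" "\<forall>j\<in>set (query_list n q t). y ! j = y' ! j"
  shows "candidates n H t y = candidates n H t y'"
proof -
  have sub: "candidates n H t y \<subseteq> candidates n H t y'"
    if "length y' = n" "\<forall>j\<in>set (query_list n q t). y ! j = y' ! j" for y y'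
  proof
    fix \<sigma> assume "\<sigma> \<in> candidates n H t y"
    then obtain z where z: "length z = n" "\<forall>j<n. j \<notin> H \<longrightarrow> z ! j = y ! j" "eval_tree t z = Some \<sigma>"
      by (auto simp: candidates_def)
    define z' where "z' = map (\<lambda>j. if j \<in> set (query_list n q t) \<or> j \<in> H then z ! j else y' ! j) [0..<n]"
    have "eval_tree t z' = eval_tree t z"
      by (rule eval_tree_cong_query_list[OF t]) (use set_query_list_subset in \<open>force simp: z'_def\<close>)
    moreover have "\<forall>j<n. j \<notin> H \<longrightarrow> z' ! j = y' ! j"
      using z(2) that(2) by (auto simp: z'_def)
    ultimately show "\<sigma> \<in> candidates n H t y'"
      using z(3) unfolding candidates_def by (intro CollectI exI[of _ z']) (simp add: z'_def)
  qed
  from sub[of y' y] sub[of y y'] assms(3-5) show ?thesis by auto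
qed

lemma eval_local_tree:
  assumes "valid_tree n q t" "\<exists>ps. follows ps t" "length y = n"
  shows "eval_tree (local_tree n q H t \<sigma>) y = local_output n H t \<sigma> y"
proof -
  define y' where "y' = map (restrict ((!) y) (set (query_list n q t))) [0..<n]"
  have "candidates n H t y' = candidates n H t y"
    by (rule candidates_cong[OF assms(1,2)]) (use set_query_list_subset assms(3) in \<open>force simp: y'_def\<close>)+
  then show ?thesis
    by (simp add: local_tree_def eval_query_tree local_output_def y'_def)
qed

lemma valid_local_tree: "valid_tree n q (local_tree n q H t \<sigma>)"
  unfolding local_tree_def
  using valid_query_tree[OF set_query_list_subset] length_query_list_le valid_tree_mono by blast

lemma mem_candidates:
  assumes t: "valid_tree n q t" "\<exists>ps. follows ps t"
    and "eval_tree t c = Some \<beta>" "length c = n"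
    and light: "\<forall>j\<in>set (query_list n q t). j \<notin> H \<longrightarrow> y ! j = c ! j"
  shows "\<beta> \<in> candidates n H t y"
proof -
  define z where "z = map (\<lambda>j. if j \<in> set (query_list n q t) then c ! j else y ! j) [0..<n]"
  have "eval_tree t z = eval_tree t c"
    by (rule eval_tree_cong_query_list[OF t]) (use set_query_list_subset assms(4) in \<open>force simp: z_def\<close>)
  moreover have "\<forall>j<n. j \<notin> H \<longrightarrow> z ! j = y ! j"
    using light by (auto simp: z_def)
  ultimately show ?thesis
    using assms(3) unfolding candidates_def by (intro CollectI exI[of _ z]) (simp add: z_def)
qed

lemma candidates_subset:
  assumes t: "valid_tree n q t" "\<exists>ps. follows ps t"
    and light: "\<forall>j\<in>set (query_list n q t). j \<notin> H \<longrightarrow> y ! j = c ! j"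
    and insensitive: "\<forall>z. length z = n \<longrightarrow> (\<forall>j<n. j \<notin> H \<longrightarrow> z ! j = c ! j) \<longrightarrow>
        eval_tree t z \<in> {Some \<beta>, None}"
  shows "candidates n H t y \<subseteq> {\<beta>}"
proof
  fix \<sigma> assume "\<sigma> \<in> candidates n H t y"
  then obtain z where z: "length z = n" "\<forall>j<n. j \<notin> H \<longrightarrow> z ! j = y ! j" "eval_tree t z = Some \<sigma>"
    by (auto simp: candidates_def)
  define z' where "z' = map (\<lambda>j. if j \<in> H then z ! j else c ! j) [0..<n]"
  have "eval_tree t z' = eval_tree t z"
    by (rule eval_tree_cong_query_list[OF t])
       (use set_query_list_subset light z(2) in \<open>force simp: z'_def\<close>)
  moreover have "eval_tree t z' \<in> {Some \<beta>, None}"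
    using insensitive by (simp add: z'_def)
  ultimately show "\<sigma> \<in> {\<beta>}" using z(3) by auto
qed

lemma prob_local_output_neq:
  fixes t :: "('s, 'a::finite option) dtree"
  assumes "\<beta> \<in> candidates n H t y"
  shows "measure_pmf.prob (pmf_of_set UNIV) {\<sigma>. local_output n H t \<sigma> y \<noteq> \<beta>}
    \<le> (if candidates n H t y = {\<beta>} then 0 else 1 - 1 / real CARD('a))"
proof (cases "is_singleton (candidates n H t y)")
  case True
  with assms have "candidates n H t y = {\<beta>}"
    by (metis is_singleton_the_elem singletonD)
  then show ?thesis by (simp add: local_output_def)
next
  case False
  then have "candidates n H t y \<noteq> {\<beta>}" by auto
  with False show ?thesis by (simp add: local_output_def prob_uniform_neq)
qed

lemma prob_local_tree_error_le:
  fixes t :: "('a::finite, 'a option) dtree" and H :: "nat set" and \<beta> :: 'a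
  assumes t: "valid_tree n q t" "\<exists>ps. follows ps t" and "length y = n" "length c = n"
  defines "hits \<equiv> \<exists>j\<in>set (query_list n q t). j \<notin> H \<and> y ! j \<noteq> c ! j"
    and "sensitive \<equiv> \<exists>z. length z = n \<and> (\<forall>j<n. j \<notin> H \<longrightarrow> z ! j = c ! j) \<and>
        eval_tree t z \<notin> {Some \<beta>, None}"
  shows "measure_pmf.prob (map_pmf (local_tree n q H t) (pmf_of_set UNIV)) {t'. eval_tree t' y \<noteq> \<beta>}
    \<le> of_bool (eval_tree t c \<noteq> Some \<beta>) + of_bool hits
       + (1 - 1 / real CARD('a)) * of_bool sensitive"
proof (cases "eval_tree t c = Some \<beta> \<and> \<not> hits")
  case True
  have mem: "\<beta> \<in> candidates n H t y"
    by (rule mem_candidates[OF t _ assms(4)]) (use True in \<open>auto simp: hits_def\<close>)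
  have singleton: "candidates n H t y = {\<beta>}" if "\<not> sensitive"
  proof -
    have "candidates n H t y \<subseteq> {\<beta>}"
      by (rule candidates_subset[OF t, where c = c]) (use True that in \<open>auto simp: hits_def sensitive_def\<close>)
    with mem show ?thesis by auto
  qed
  have nonneg: "0 \<le> 1 - 1 / real CARD('a)"
    by simp
  have "measure_pmf.prob (pmf_of_set UNIV) {\<sigma>. local_output n H t \<sigma> y \<noteq> \<beta>}
      \<le> (1 - 1 / real CARD('a)) * of_bool sensitive"
    using prob_local_output_neq[OF mem] singleton
    by (cases sensitive) (simp_all split: if_splits, use nonneg in linarith)
  then show ?thesis
    using True by (simp add: eval_local_tree[OF t assms(3)] vimage_def)
next
  case False
  have "measure_pmf.prob (map_pmf (local_tree n q H t) (pmf_of_set UNIV)) {t'. eval_tree t' y \<noteq> \<beta>} \<le> 1"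
    by (rule measure_pmf.prob_le_1)
  moreover have "1 \<le> of_bool (eval_tree t c \<noteq> Some \<beta>) + (of_bool hits :: real)"
    using False by auto
  moreover have "0 \<le> (1 - 1 / real CARD('a)) * of_bool sensitive" by simp
  ultimately show ?thesis by linarith
qed

definition heavy_queries :: "(nat \<Rightarrow> ('s, 'o) dtree pmf) \<Rightarrow> nat \<Rightarrow> nat \<Rightarrow> real \<Rightarrow> nat \<Rightarrow> nat set" where
  "heavy_queries Dec n q \<delta> i =
     heavy_positions (Dec i) (\<lambda>t. set (query_list n q t)) n (real q / (\<delta> * real n))"

definition local_decoder ::
    "(nat \<Rightarrow> ('s, 'a::finite option) dtree pmf) \<Rightarrow> nat \<Rightarrow> nat \<Rightarrow> real \<Rightarrow> nat \<Rightarrow> ('s, 'a) dtree pmf" where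
  "local_decoder Dec n q \<delta> i =
     bind_pmf (Dec i) (\<lambda>t. map_pmf (local_tree n q (heavy_queries Dec n q \<delta> i) t) (pmf_of_set UNIV))"

lemma query_decoder_local_decoder: "query_decoder k n q (local_decoder Dec n q \<delta>)"
  by (auto simp: query_decoder_def local_decoder_def valid_local_tree)

lemma prob_reads_corrupted_light_le:
  fixes Dec :: "nat \<Rightarrow> ('s, 'o) dtree pmf"
  assumes "0 < \<delta>" "0 \<le> r" "length y = n" "length c = n" "real (hamming y c) \<le> r * real n"
  shows "measure_pmf.prob (Dec i)
      {t. \<exists>j\<in>set (query_list n q t). j \<notin> heavy_queries Dec n q \<delta> i \<and> y ! j \<noteq> c ! j}
    \<le> r * real q / \<delta>"
proof -
  define D where "D = {j. j < n \<and> y ! j \<noteq> c ! j}"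
  have "real (card D) \<le> r * real n"
    using assms(3-5) by (simp add: hamming_def D_def)
  have "{t. \<exists>j\<in>set (query_list n q t). j \<notin> heavy_queries Dec n q \<delta> i \<and> y ! j \<noteq> c ! j}
      = {t. \<exists>j\<in>set (query_list n q t). j \<in> D \<and> j \<notin> heavy_queries Dec n q \<delta> i}"
    using set_query_list_subset by (fastforce simp: D_def)
  also have "measure_pmf.prob (Dec i) \<dots> \<le> real (card D) * (real q / (\<delta> * real n))"
    unfolding heavy_queries_def using \<open>0 < \<delta>\<close> by (intro prob_hits_light_le) (auto simp: D_def)
  also have "\<dots> \<le> r * real q / \<delta>"
  proof (cases "n = 0")
    case False
    with \<open>real (card D) \<le> r * real n\<close> \<open>0 < \<delta>\<close>
    have "real (card D) * (real q / (\<delta> * real n)) \<le> (r * real n) * (real q / (\<delta> * real n))"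
      by (intro mult_right_mono) auto
    with False show ?thesis by simp
  qed (use assms in simp)
  finally show ?thesis .
qed

lemma prob_sensitive_le:
  fixes Dec :: "nat \<Rightarrow> ('a::finite, 'a option) dtree pmf"
  assumes rldc: "RLDC_decoder C k n q \<delta> \<gamma> s Dec" and nonad: "nonadaptive k Dec" and "0 < \<delta>"
    and b: "length b = k" and i: "i < k"
  shows "measure_pmf.prob (Dec i) {t. \<exists>z. length z = n \<and>
      (\<forall>j<n. j \<notin> heavy_queries Dec n q \<delta> i \<longrightarrow> z ! j = C b ! j) \<and> eval_tree t z \<notin> {Some (b ! i), None}}
    \<le> s * real CARD('a) ^ q"
proof (rule prob_exists_bad_alteration_le[where P = "\<lambda>t. set (query_list n q t)"
      and bad = "\<lambda>t z. eval_tree t z \<notin> {Some (b ! i), None}"])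
  define H where "H = heavy_queries Dec n q \<delta> i"
  have tree: "valid_tree n q t" "\<exists>ps. follows ps t" if "t \<in> set_pmf (Dec i)" for t
    using rldc nonad i that by (auto simp: RLDC_decoder_def query_decoder_def nonadaptive_def)
  show "set (query_list n q t) \<subseteq> {..<n}" "card (set (query_list n q t)) \<le> q" for t
    by (rule set_query_list_subset card_set_query_list_le)+
  show "(eval_tree t z \<notin> {Some (b ! i), None}) = (eval_tree t z' \<notin> {Some (b ! i), None})"
    if "t \<in> set_pmf (Dec i)" "\<forall>j\<in>set (query_list n q t). z ! j = z' ! j" for t z z'
    using eval_tree_cong_query_list[OF tree[OF that(1)] that(2)] by simp
  show "finite H"
    by (simp add: H_def heavy_queries_def heavy_positions_def)
  have "real (card H) \<le> \<delta> * real n"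
    unfolding H_def heavy_queries_def
    by (rule card_heavy_positions_le[OF set_query_list_subset card_set_query_list_le \<open>0 < \<delta>\<close>])
  show "measure_pmf.prob (Dec i) {t. eval_tree t z \<notin> {Some (b ! i), None}} \<le> s"
    if "length z = n" "\<forall>j<n. j \<notin> H \<longrightarrow> z ! j = C b ! j" for z
  proof -
    have "{j. j < length z \<and> j < length (C b) \<and> z ! j \<noteq> C b ! j} \<subseteq> H"
      using that by auto
    then have "hamming z (C b) \<le> card H"
      unfolding hamming_def by (rule card_mono[OF \<open>finite H\<close>])
    with \<open>real (card H) \<le> \<delta> * real n\<close> have "real (hamming z (C b)) \<le> \<delta> * real n"
      by linarith
    with rldc b i that(1) show ?thesis
      by (auto simp: RLDC_decoder_def)
  qed
qed

lemma prob_local_decoder_error_le: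
  fixes Dec :: "nat \<Rightarrow> ('a::finite, 'a option) dtree pmf" and \<delta> :: real and \<beta> :: 'a
  assumes tree: "\<And>t. t \<in> set_pmf (Dec i) \<Longrightarrow> valid_tree n q t \<and> (\<exists>ps. follows ps t)"
    and y: "length y = n" and c: "length c = n"
  defines "H \<equiv> heavy_queries Dec n q \<delta> i"
  shows "measure_pmf.prob (local_decoder Dec n q \<delta> i) {t. eval_tree t y \<noteq> \<beta>}
    \<le> measure_pmf.prob (Dec i) {t. eval_tree t c \<noteq> Some \<beta>}
      + measure_pmf.prob (Dec i) {t. \<exists>j\<in>set (query_list n q t). j \<notin> H \<and> y ! j \<noteq> c ! j}
      + (1 - 1 / real CARD('a)) * measure_pmf.prob (Dec i)
          {t. \<exists>z. length z = n \<and> (\<forall>j<n. j \<notin> H \<longrightarrow> z ! j = c ! j) \<and> eval_tree t z \<notin> {Some \<beta>, None}}"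
proof -
  have bounded: "integrable (Dec i) (\<lambda>t. of_bool (Q t) :: real)" for Q
    by (rule measure_pmf.integrable_const_bound[where B=1]) auto
  have "measure_pmf.prob (local_decoder Dec n q \<delta> i) {t. eval_tree t y \<noteq> \<beta>}
      = (\<integral>t. measure_pmf.prob (map_pmf (local_tree n q H t) (pmf_of_set UNIV))
              {t'. eval_tree t' y \<noteq> \<beta>} \<partial>Dec i)"
    unfolding local_decoder_def H_def by (rule prob_bind_pmf)
  also have "\<dots> \<le> (\<integral>t. of_bool (eval_tree t c \<noteq> Some \<beta>)
      + of_bool (\<exists>j\<in>set (query_list n q t). j \<notin> H \<and> y ! j \<noteq> c ! j)
      + (1 - 1 / real CARD('a)) * of_bool (\<exists>z. length z = n \<and> (\<forall>j<n. j \<notin> H \<longrightarrow> z ! j = c ! j) \<and>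
          eval_tree t z \<notin> {Some \<beta>, None}) \<partial>Dec i)"
    (is "(\<integral>t. ?f t \<partial>_) \<le> (\<integral>t. ?g t \<partial>_)")
  proof (rule integral_mono_AE)
    show "integrable (Dec i) ?f"
      by (auto intro!: measure_pmf.integrable_const_bound[where B=1])
    show "integrable (Dec i) ?g"
      using bounded by (intro Bochner_Integration.integrable_add integrable_mult_right)
    show "AE t in Dec i. ?f t \<le> ?g t"
      using prob_local_tree_error_le[OF _ _ y c] tree by (simp add: AE_measure_pmf_iff)
  qed
  finally show ?thesis
    using bounded by (simp add: integral_of_bool_pmf)
qed

lemma local_decoder_error_le:
  fixes Dec :: "nat \<Rightarrow> ('a::finite, 'a option) dtree pmf"
  assumes code: "\<forall>b. length b = k \<longrightarrow> length (C b) = n"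
    and rldc: "RLDC_decoder C k n q \<delta> (1 - \<epsilon>) s Dec" and nonad: "nonadaptive k Dec"
    and "0 < \<delta>" "0 \<le> r" and b: "length b = k" and i: "i < k" and y: "length y = n"
    and dist: "real (hamming y (C b)) \<le> r * real n"
  shows "measure_pmf.prob (local_decoder Dec n q \<delta> i) {t. eval_tree t y \<noteq> b ! i}
    \<le> \<epsilon> + s * real CARD('a) ^ q * (1 - 1 / real CARD('a)) + r * real q / \<delta>"
proof -
  have "length (C b) = n"
    using code b by simp
  have tree: "valid_tree n q t \<and> (\<exists>ps. follows ps t)" if "t \<in> set_pmf (Dec i)" for t
    using rldc nonad i that by (auto simp: RLDC_decoder_def query_decoder_def nonadaptive_def)
  have "measure_pmf.prob (Dec i) {t. eval_tree t (C b) \<noteq> Some (b ! i)}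
      = 1 - measure_pmf.prob (Dec i) {t. eval_tree t (C b) = Some (b ! i)}"
    using measure_pmf.prob_compl[of "{t. eval_tree t (C b) = Some (b ! i)}" "Dec i"]
    by (simp add: Compl_eq_Diff_UNIV[symmetric] Collect_neg_eq)
  also have "\<dots> \<le> \<epsilon>"
  proof -
    have "1 - \<epsilon> \<le> measure_pmf.prob (Dec i) {t. eval_tree t (C b) = Some (b ! i)}"
      using rldc b i by (simp add: RLDC_decoder_def)
    then show ?thesis by linarith
  qed
  finally have "measure_pmf.prob (Dec i) {t. eval_tree t (C b) \<noteq> Some (b ! i)} \<le> \<epsilon>" .
  moreover have "measure_pmf.prob (Dec i) {t. \<exists>j\<in>set (query_list n q t).
      j \<notin> heavy_queries Dec n q \<delta> i \<and> y ! j \<noteq> C b ! j} \<le> r * real q / \<delta>"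
    by (rule prob_reads_corrupted_light_le) (use assms \<open>length (C b) = n\<close> in auto)
  moreover have "(1 - 1 / real CARD('a)) * measure_pmf.prob (Dec i) {t. \<exists>z. length z = n \<and>
      (\<forall>j<n. j \<notin> heavy_queries Dec n q \<delta> i \<longrightarrow> z ! j = C b ! j) \<and> eval_tree t z \<notin> {Some (b ! i), None}}
      \<le> (1 - 1 / real CARD('a)) * (s * real CARD('a) ^ q)"
    by (intro mult_left_mono prob_sensitive_le[OF rldc nonad \<open>0 < \<delta>\<close> b i]) simp
  ultimately show ?thesis
    using prob_local_decoder_error_le[where Dec = Dec and i = i, OF tree y \<open>length (C b) = n\<close>, where \<delta> = \<delta> and \<beta> = "b ! i"]
    by (simp add: algebra_simps)
qed

lemma is_LDC_uniform_guess:
  fixes C :: "'a::finite list \<Rightarrow> 'a list"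
  assumes "1 - 1 / real CARD('a) \<le> e"
  shows "is_LDC C k n q r e"
proof -
  have "LDC_decoder C k n q r e (\<lambda>_. map_pmf Leaf (pmf_of_set UNIV))"
    using assms by (auto simp: LDC_decoder_def query_decoder_def vimage_def prob_uniform_neq
        intro: valid_tree.intros)
  then show ?thesis
    unfolding is_LDC_def by blast
qed

lemma uniform_guess_within_bound:
  fixes N \<delta> \<epsilon> s r :: real
  assumes "1 \<le> N" "\<delta> \<le> 0" "0 < r"
    and "r < \<delta> * (N - 1) / (real q * N) * (1 - \<epsilon> * N / (N - 1) - s * N ^ q)"
  shows "1 - 1 / N \<le> \<epsilon> + s * N ^ q * (1 - 1 / N) + r * real q / \<delta>"
proof -
  define B where "B = 1 - \<epsilon> * N / (N - 1) - s * N ^ q"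
  have "q \<noteq> 0"
    using assms(3,4) by (cases q) simp_all
  moreover have "N \<noteq> 1"
    using assms(3,4) by (cases "N = 1") simp_all
  moreover have "\<delta> \<noteq> 0"
    using assms(3,4) by (cases "\<delta> = 0") simp_all
  ultimately have "q > 0" "N > 1" "\<delta> < 0"
    using assms(1,2) by auto
  have "(\<delta> * (N - 1) / (real q * N) * B) * (real q / \<delta>) < r * (real q / \<delta>)"
    using assms(4) \<open>q > 0\<close> \<open>\<delta> < 0\<close>
    by (intro mult_strict_right_mono_neg) (simp_all add: B_def divide_pos_neg)
  also have "(\<delta> * (N - 1) / (real q * N) * B) * (real q / \<delta>) = (1 - 1 / N) - \<epsilon> - s * N ^ q * (1 - 1 / N)"
    using \<open>q > 0\<close> \<open>N > 1\<close> \<open>\<delta> < 0\<close> by (simp add: B_def field_simps)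
  finally show ?thesis
    by simp
qed

theorem mainTheorem6:
  fixes C :: "'a::finite list \<Rightarrow> 'a list"
    and k n q :: nat and \<delta> \<epsilon> s r :: real
    and Dec :: "nat \<Rightarrow> ('a, 'a option) dtree pmf"
  assumes code: "\<forall>b. length b = k \<longrightarrow> length (C b) = n"
    and rldc: "RLDC_decoder C k n q \<delta> (1 - \<epsilon>) s Dec"
    and nonad: "nonadaptive k Dec"
    and s_small: "s < 1 / real CARD('a) ^ q"
    and r_pos: "0 < r"
    and r_bound: "r < \<delta> * (real CARD('a) - 1) / (real q * real CARD('a)) *
        (1 - \<epsilon> * real CARD('a) / (real CARD('a) - 1) - s * real CARD('a) ^ q)"
  shows "is_LDC C k n q r (\<epsilon> + s * real CARD('a) ^ q * (1 - 1 / real CARD('a)) + r * real q / \<delta>)"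
proof (cases "0 < \<delta>")
  case True
  have "LDC_decoder C k n q r (\<epsilon> + s * real CARD('a) ^ q * (1 - 1 / real CARD('a)) + r * real q / \<delta>)
      (local_decoder Dec n q \<delta>)"
    using query_decoder_local_decoder local_decoder_error_le[OF code rldc nonad True] r_pos
    by (auto simp: LDC_decoder_def)
  then show ?thesis
    unfolding is_LDC_def by blast
next
  case False
  \<comment> \<open>The radius bound then forces the error bound up to \<open>1 - 1/|\<Sigma>|\<close>, the error of guessing.\<close>
  have "1 \<le> real CARD('a)"
    by (simp add: Suc_le_eq)
  with False r_pos r_bound show ?thesis
    by (intro is_LDC_uniform_guess uniform_guess_within_bound) auto
qed

end
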